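(* Let $\langle\cdot\rangle$ satisfy (A1) (the shifts $a\mapsto a(\cdot+z)$, $z\in\mathbb Z^d$, preserve $\langle\cdot\rangle$), and let $G_T$ be the Green's function. Then for all $T>0$, $a\in\Omega$ and $b\in\mathbb B^d$, $$1+\frac{a(b)}{1-a(b)\nabla\nabla G_T(a,b,b)}\le K\,\omega_0^2(a,b),$$ where $K$ depends only on $d$.
   Context: $\mathbb B^d$ is the set of nearest-neighbour bonds of $\mathbb Z^d$; $x_b,y_b$ endpoints of $b$ with $y_b-x_b\in\{e_1,\dots,e_d\}$; $\nabla u(b)=u(y_b)-u(x_b)$, $\nabla^*F(x)=\sum_i(F(\{x-e_i,x\})-F(\{x,x+e_i\}))$. $\Omega=[0,1]^{\mathbb B^d}$. Green's function: $x\mapsto G_T(a,x,y)$ is the unique $\ell^2(\mathbb Z^d)$ solution of $\frac1TG_T(a,\cdot,y)+\nabla^*(a\nabla G_T(a,\cdot,y))=\delta(\cdot-y)$; $\nabla\nabla G_T(a,b,b)=G_T(a,y_b,y_b)-G_T(a,x_b,y_b)-G_T(a,y_b,x_b)+G_T(a,x_b,x_b)$. Chemical distance $\mathrm{dist}_a(x,y)=\inf\{\sum_{b\in\pi}a(b)^{-1}:\pi$ a path from $x$ to $y\}$ with $1/0=\infty$; $\omega(a,b)=\mathrm{dist}_a(x_b,y_b)^{d+2}$; $a^{b,0}$ is $a$ with $a(b)$ replaced by $0$; $\omega_0(a,b)=\omega(a^{b,0},b)\in[1,\infty]$. *)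

theory Defs
  imports "HOL-Analysis.Analysis"
begin

text \<open>Lattice Z^d is int^'n (d = CARD('n)). A bond b = {x, x + e_i} is encoded by the pair
 (x, i), so x_b = x and y_b = x + e_i.\<close>

definition unitv :: "'n::finite \<Rightarrow> int^'n" where
  "unitv i = axis i 1"

definition in_Omega :: "(int^'n::finite \<Rightarrow> 'n \<Rightarrow> real) \<Rightarrow> bool" where
  "in_Omega a \<longleftrightarrow> (\<forall>x i. 0 \<le> a x i \<and> a x i \<le> 1)"

definition grad :: "(int^'n::finite \<Rightarrow> real) \<Rightarrow> int^'n \<Rightarrow> 'n \<Rightarrow> real" where
  "grad u x i = u (x + unitv i) - u x"

definition divg :: "(int^'n::finite \<Rightarrow> 'n \<Rightarrow> real) \<Rightarrow> int^'n \<Rightarrow> real" where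
  "divg F x = (\<Sum>i\<in>UNIV. F (x - unitv i) i - F x i)"

definition ell2 :: "(int^'n::finite \<Rightarrow> real) \<Rightarrow> bool" where
  "ell2 u \<longleftrightarrow> (\<lambda>x. (u x)\<^sup>2) summable_on UNIV"

definition green :: "real \<Rightarrow> (int^'n::finite \<Rightarrow> 'n \<Rightarrow> real) \<Rightarrow> int^'n \<Rightarrow> int^'n \<Rightarrow> real" where
  "green T a x y = (THE u. ell2 u \<and>
      (\<forall>z. u z / T + divg (\<lambda>w i. a w i * grad u w i) z = (if z = y then 1 else 0))) x"

definition gradgrad_green :: "real \<Rightarrow> (int^'n::finite \<Rightarrow> 'n \<Rightarrow> real) \<Rightarrow> int^'n \<Rightarrow> 'n \<Rightarrow> real" where
  "gradgrad_green T a x i = (let y = x + unitv i in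
     green T a y y - green T a x y - green T a y x + green T a x x)"

definition bond_cost :: "(int^'n::finite \<Rightarrow> 'n \<Rightarrow> real) \<Rightarrow> int^'n \<Rightarrow> 'n \<Rightarrow> ereal" where
  "bond_cost a x i = (if a x i = 0 then \<infinity> else ereal (1 / a x i))"

definition nn :: "int^'n::finite \<Rightarrow> int^'n \<Rightarrow> bool" where
  "nn p q \<longleftrightarrow> (\<exists>i. q = p + unitv i \<or> p = q + unitv i)"

definition step_cost :: "(int^'n::finite \<Rightarrow> 'n \<Rightarrow> real) \<Rightarrow> int^'n \<Rightarrow> int^'n \<Rightarrow> ereal" where
  "step_cost a p q = (if \<exists>i. q = p + unitv i then bond_cost a p (SOME i. q = p + unitv i)
                      else bond_cost a q (SOME i. p = q + unitv i))"

definition is_path :: "(int^'n::finite) list \<Rightarrow> bool" where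
  "is_path ps \<longleftrightarrow> ps \<noteq> [] \<and> (\<forall>k. Suc k < length ps \<longrightarrow> nn (ps ! k) (ps ! Suc k))"

definition path_cost :: "(int^'n::finite \<Rightarrow> 'n \<Rightarrow> real) \<Rightarrow> (int^'n) list \<Rightarrow> ereal" where
  "path_cost a ps = (\<Sum>k<length ps - 1. step_cost a (ps ! k) (ps ! Suc k))"

definition chem_dist :: "(int^'n::finite \<Rightarrow> 'n \<Rightarrow> real) \<Rightarrow> int^'n \<Rightarrow> int^'n \<Rightarrow> ereal" where
  "chem_dist a x y = Inf {path_cost a ps | ps. is_path ps \<and> hd ps = x \<and> last ps = y}"

definition omega :: "(int^'n::finite \<Rightarrow> 'n \<Rightarrow> real) \<Rightarrow> int^'n \<Rightarrow> 'n \<Rightarrow> ereal" where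
  "omega a x i = chem_dist a x (x + unitv i) ^ (CARD('n) + 2)"

definition omega0 :: "(int^'n::finite \<Rightarrow> 'n \<Rightarrow> real) \<Rightarrow> int^'n \<Rightarrow> 'n \<Rightarrow> ereal" where
  "omega0 a x i = omega (a(x := (a x)(i := 0))) x i"

end

theory Submission
  imports Defs
begin

text \<open>Let \<open>w = G\<^sub>T(\<cdot>,y\<^sub>b) - G\<^sub>T(\<cdot>,x\<^sub>b)\<close> be the potential of a unit dipole across \<open>b\<close>.
  Testing its equation against \<open>w\<close> shows that its Dirichlet energy is \<open>D = \<nabla>\<nabla>G\<^sub>T(a,b,b)\<close>;
  the bond \<open>b\<close> carries \<open>a(b) D\<^sup>2\<close> of it, so every other bond \<open>e\<close> carries at most
  \<open>E = D - a(b) D\<^sup>2\<close> and \<open>w\<close> changes across \<open>e\<close> by at most \<open>\<surd>E / a(e)\<close>. Summing along a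
  path from \<open>x\<^sub>b\<close> to \<open>y\<^sub>b\<close> avoiding \<open>b\<close> gives \<open>|D| \<le> \<surd>E \<cdot> R\<close>, where \<open>R \<ge> 1\<close> is the
  chemical distance of the endpoints of \<open>b\<close> once \<open>a(b)\<close> is set to \<open>0\<close>,
  and since \<open>E = D (1 - a(b) D)\<close> this forces \<open>1/(1 - a(b) D) \<le> 1 + a(b) R\<^sup>2\<close>, whence the claim
  with \<open>K = 3\<close>. The Green's function itself exists as the Neumann series of a killed lazy
  random walk and is unique by the energy identity.\<close>

section \<open>Sums and square-summable functions on the lattice\<close>

lemma has_sum_translate:
  fixes f :: "'a::ab_group_add \<Rightarrow> 'b::topological_comm_monoid_add"
  shows "((\<lambda>z. f (z + c)) has_sum s) UNIV \<longleftrightarrow> (f has_sum s) UNIV"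
proof -
  have "inj (\<lambda>z::'a. z + c)" "range (\<lambda>z::'a. z + c) = UNIV"
    by (auto simp: inj_on_def intro: surjI[of _ "\<lambda>z. z - c"])
  then show ?thesis
    using has_sum_reindex[of "\<lambda>z. z + c" UNIV f s] by (simp add: comp_def)
qed

lemma summable_on_translate:
  fixes f :: "'a::ab_group_add \<Rightarrow> 'b::topological_comm_monoid_add"
  shows "(\<lambda>z. f (z + c)) summable_on UNIV \<longleftrightarrow> f summable_on UNIV"
  using has_sum_translate unfolding summable_on_def by blast

lemma has_sum_diff:
  fixes f g :: "'a \<Rightarrow> 'b::topological_ab_group_add"
  assumes "(f has_sum s) A" "(g has_sum t) A"
  shows "((\<lambda>x. f x - g x) has_sum (s - t)) A"
proof -
  have "((\<lambda>x. - g x) has_sum (- t)) A" using assms(2) by (simp add: has_sum_uminus)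
  from has_sum_add[OF assms(1) this] show ?thesis by simp
qed

lemma summable_on_diff:
  fixes f g :: "'a \<Rightarrow> 'b::topological_ab_group_add"
  shows "f summable_on A \<Longrightarrow> g summable_on A \<Longrightarrow> (\<lambda>x. f x - g x) summable_on A"
  using has_sum_diff unfolding summable_on_def by blast

lemma has_sum_sum:
  fixes f :: "'i \<Rightarrow> 'a \<Rightarrow> 'b::topological_comm_monoid_add"
  assumes "finite I" "\<And>i. i \<in> I \<Longrightarrow> (f i has_sum s i) A"
  shows "((\<lambda>x. \<Sum>i\<in>I. f i x) has_sum (\<Sum>i\<in>I. s i)) A"
  using assms by (induction I rule: finite_induct) (auto intro: has_sum_add)

lemma ell2_add:
  assumes "ell2 f" "ell2 g"
  shows "ell2 (\<lambda>z. f z + g z)"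
  unfolding ell2_def
proof (rule summable_on_comparison_test)
  show "(\<lambda>z. 2 * (f z)\<^sup>2 + 2 * (g z)\<^sup>2) summable_on UNIV"
    using assms unfolding ell2_def by (intro summable_on_add summable_on_cmult_right)
  show "(f z + g z)\<^sup>2 \<le> 2 * (f z)\<^sup>2 + 2 * (g z)\<^sup>2" for z
    using zero_le_power2[of "f z - g z"] by (simp add: power2_eq_square algebra_simps)
qed auto

lemma ell2_scale: "ell2 u \<Longrightarrow> ell2 (\<lambda>z. c * u z)"
  unfolding ell2_def by (simp add: power_mult_distrib summable_on_cmult_right)

lemma ell2_diff: "ell2 f \<Longrightarrow> ell2 g \<Longrightarrow> ell2 (\<lambda>z. f z - g z)"
  using ell2_add[of f "\<lambda>z. - 1 * g z"] ell2_scale[of g "- 1"] by simp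

lemma ell2_translate: "ell2 u \<Longrightarrow> ell2 (\<lambda>z. u (z + c))"
  unfolding ell2_def by (subst summable_on_translate)

lemma ell2_grad: "ell2 u \<Longrightarrow> ell2 (\<lambda>z. grad u z i)"
  unfolding grad_def by (intro ell2_diff ell2_translate)

lemma summable_on_mult_ell2:
  assumes "ell2 f" "ell2 g"
  shows "(\<lambda>z. f z * g z) summable_on UNIV"
proof -
  have "(\<lambda>z. ((f z + g z)\<^sup>2 - (f z)\<^sup>2 - (g z)\<^sup>2) * (1 / 2)) summable_on UNIV"
    using ell2_add[OF assms] assms unfolding ell2_def
    by (intro summable_on_cmult_left summable_on_diff)
  then show ?thesis by (simp add: power2_eq_square algebra_simps)
qed

lemma ell2_flux:
  assumes a: "in_Omega a" and u: "ell2 u"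
  shows "ell2 (\<lambda>z. a z i * grad u z i)"
  unfolding ell2_def
proof (rule summable_on_comparison_test[OF ell2_grad[OF u, unfolded ell2_def]])
  show "(a z i * grad u z i)\<^sup>2 \<le> (grad u z i)\<^sup>2" for z
    using a unfolding in_Omega_def
    by (simp add: power_mult_distrib mult_left_le_one_le power_le_one)
qed auto

section \<open>The massive operator and its energy\<close>

definition massive_op :: "real \<Rightarrow> (int^'n::finite \<Rightarrow> 'n \<Rightarrow> real) \<Rightarrow> (int^'n \<Rightarrow> real) \<Rightarrow> int^'n \<Rightarrow> real" where
  "massive_op T a u z = u z / T + divg (\<lambda>w i. a w i * grad u w i) z"

definition dirichlet_energy :: "real \<Rightarrow> (int^'n::finite \<Rightarrow> 'n \<Rightarrow> real) \<Rightarrow> (int^'n \<Rightarrow> real) \<Rightarrow> real" where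
  "dirichlet_energy T a u =
     infsum (\<lambda>z. (u z)\<^sup>2) UNIV / T + (\<Sum>i\<in>UNIV. infsum (\<lambda>z. a z i * (grad u z i)\<^sup>2) UNIV)"

lemma divg_diff: "divg (\<lambda>w i. F w i - G w i) z = divg F z - divg G z"
  by (simp add: divg_def sum_subtractf[symmetric] algebra_simps)

lemma massive_op_diff: "massive_op T a (\<lambda>z. u z - v z) z = massive_op T a u z - massive_op T a v z"
proof -
  have "(\<lambda>w i. a w i * grad (\<lambda>z. u z - v z) w i) = (\<lambda>w i. a w i * grad u w i - a w i * grad v w i)"
    by (auto simp: grad_def algebra_simps)
  then show ?thesis
    by (simp add: massive_op_def divg_diff diff_divide_distrib)
qed

lemma massive_op_scale: "massive_op T a (\<lambda>z. c * u z) z = c * massive_op T a u z"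
  by (simp add: massive_op_def divg_def grad_def sum_distrib_left algebra_simps)

text \<open>Summation by parts: the pairing of \<open>u\<close> with \<open>\<nabla>\<^sup>*(a\<nabla>u)\<close> is the bond energy.\<close>

lemma has_sum_pairing_massive_op:
  assumes a: "in_Omega a" and u: "ell2 u"
  shows "((\<lambda>z. u z * massive_op T a u z) has_sum dirichlet_energy T a u) UNIV"
proof -
  define F where "F z i = a z i * grad u z i" for z i
  have bond: "((\<lambda>z. u z * F (z - unitv i) i - u z * F z i) has_sum
      infsum (\<lambda>z. a z i * (grad u z i)\<^sup>2) UNIV) UNIV" for i
  proof -
    have flux: "ell2 (\<lambda>z. F z i)" unfolding F_def by (rule ell2_flux[OF a u])
    define S where "S = infsum (\<lambda>z. u (z + unitv i) * F z i) UNIV"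
    have forward: "((\<lambda>z. u (z + unitv i) * F z i) has_sum S) UNIV"
      unfolding S_def using summable_on_mult_ell2[OF ell2_translate[OF u] flux] by (rule has_sum_infsum)
    have backward: "((\<lambda>z. u z * F (z - unitv i) i) has_sum S) UNIV"
      by (rule has_sum_translate[where c = "unitv i", THEN iffD1]) (use forward in simp)
    have diagonal: "((\<lambda>z. u z * F z i) has_sum infsum (\<lambda>z. u z * F z i) UNIV) UNIV"
      using summable_on_mult_ell2[OF u flux] by (rule has_sum_infsum)
    have "(\<lambda>z. u (z + unitv i) * F z i - u z * F z i) = (\<lambda>z. a z i * (grad u z i)\<^sup>2)"
      by (auto simp: F_def grad_def power2_eq_square algebra_simps)
    then have "infsum (\<lambda>z. a z i * (grad u z i)\<^sup>2) UNIV = S - infsum (\<lambda>z. u z * F z i) UNIV"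
      using has_sum_diff[OF forward diagonal] by (simp add: infsumI)
    then show ?thesis using has_sum_diff[OF backward diagonal] by simp
  qed
  have "((\<lambda>z. (u z)\<^sup>2 * (1/T) + (\<Sum>i\<in>UNIV. u z * F (z - unitv i) i - u z * F z i)) has_sum
      (infsum (\<lambda>z. (u z)\<^sup>2) UNIV * (1/T) + (\<Sum>i\<in>UNIV. infsum (\<lambda>z. a z i * (grad u z i)\<^sup>2) UNIV))) UNIV"
    using u unfolding ell2_def by (intro has_sum_add has_sum_cmult_left has_sum_sum bond) auto
  moreover have "(\<lambda>z. (u z)\<^sup>2 * (1/T) + (\<Sum>i\<in>UNIV. u z * F (z - unitv i) i - u z * F z i))
      = (\<lambda>z. u z * massive_op T a u z)"
    by (auto simp: massive_op_def divg_def F_def sum_distrib_left power2_eq_square algebra_simps)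
  ultimately show ?thesis by (simp add: dirichlet_energy_def)
qed

lemma summable_on_bond_energy:
  assumes a: "in_Omega a" and u: "ell2 u"
  shows "(\<lambda>z. a z i * (grad u z i)\<^sup>2) summable_on UNIV"
  using ell2_grad[OF u, of i] unfolding ell2_def
proof (rule summable_on_comparison_test)
  show "a z i * (grad u z i)\<^sup>2 \<le> (grad u z i)\<^sup>2" "0 \<le> a z i * (grad u z i)\<^sup>2" for z
    using a unfolding in_Omega_def by (auto simp: mult_left_le_one_le)
qed

lemma sum_bond_energy_le_dirichlet_energy:
  assumes T: "T > 0" and a: "in_Omega a" and u: "ell2 u" and F: "finite F"
  shows "(\<Sum>(z, j)\<in>F. a z j * (grad u z j)\<^sup>2) \<le> dirichlet_energy T a u"
proof -
  define e where "e z j = a z j * (grad u z j)\<^sup>2" for z j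
  have e0: "e z j \<ge> 0" for z j using a unfolding e_def in_Omega_def by simp
  have "(\<Sum>(z, j)\<in>F. e z j) \<le> (\<Sum>(z, j)\<in>fst ` F \<times> UNIV. e z j)"
    using F e0 by (intro sum_mono2) (auto simp: case_prod_beta intro: rev_image_eqI)
  also have "\<dots> = (\<Sum>j\<in>UNIV. \<Sum>z\<in>fst ` F. e z j)"
    by (simp add: sum.cartesian_product[symmetric] sum.swap[of _ "fst ` F"])
  also have "\<dots> \<le> (\<Sum>j\<in>UNIV. infsum (\<lambda>z. e z j) UNIV)"
    using F e0 summable_on_bond_energy[OF a u] unfolding e_def
    by (intro sum_mono finite_sum_le_infsum) auto
  also have "\<dots> \<le> dirichlet_energy T a u"
  proof -
    have "0 \<le> infsum (\<lambda>z. (u z)\<^sup>2) UNIV / T" using T by (intro divide_nonneg_pos infsum_nonneg) auto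
    then show ?thesis unfolding dirichlet_energy_def e_def by linarith
  qed
  finally show ?thesis unfolding e_def .
qed

lemma massive_op_eq_zero_imp_zero:
  assumes T: "T > 0" and a: "in_Omega a" and u: "ell2 u" and L: "\<And>z. massive_op T a u z = 0"
  shows "u z = 0"
proof -
  have "dirichlet_energy T a u = 0"
    using has_sum_pairing_massive_op[OF a u, of T] L by (simp add: has_sum_unique)
  moreover have "0 \<le> (\<Sum>i\<in>UNIV. infsum (\<lambda>z. a z i * (grad u z i)\<^sup>2) UNIV)"
    using a by (intro sum_nonneg infsum_nonneg) (auto simp: in_Omega_def)
  ultimately have "infsum (\<lambda>z. (u z)\<^sup>2) UNIV / T \<le> 0"
    unfolding dirichlet_energy_def by linarith
  then have "infsum (\<lambda>z. (u z)\<^sup>2) UNIV \<le> 0"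
    using T by (simp add: divide_le_0_iff)
  then have "(u z)\<^sup>2 = 0"
    using u unfolding ell2_def by (intro nonneg_infsum_le_0D[where x = z]) auto
  then show ?thesis by simp
qed

lemma green_eqI:
  assumes T: "T > 0" and a: "in_Omega a" and g: "ell2 g"
    and L: "\<And>z. massive_op T a g z = (if z = p then 1 else 0)"
  shows "green T a z p = g z"
proof -
  have "(THE u. ell2 u \<and> (\<forall>z. massive_op T a u z = (if z = p then 1 else 0))) = g"
  proof (rule the_equality)
    fix u assume u: "ell2 u \<and> (\<forall>z. massive_op T a u z = (if z = p then 1 else 0))"
    have "(\<lambda>z. u z - g z) z = 0" for z
    proof (rule massive_op_eq_zero_imp_zero[OF T a])
      show "ell2 (\<lambda>z. u z - g z)" using u g by (intro ell2_diff) auto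
    qed (use u L in \<open>simp add: massive_op_diff\<close>)
    then show "u = g" by auto
  qed (use g L in auto)
  then show ?thesis unfolding green_def massive_op_def by simp
qed

section \<open>Existence of the Green's function\<close>

text \<open>Dividing \<open>massive_op T a\<close> by the bound \<open>1/T + 2d\<close> on its diagonal writes it as
  \<open>(1/T + 2d)(id - walk_op T a)\<close>, where \<open>walk_op T a\<close> is positive and loses mass: one step of a
  lazy random walk killed at rate \<open>1/T\<close>. The Green's function is the resulting Neumann series.\<close>

definition walk_op :: "real \<Rightarrow> (int^'n::finite \<Rightarrow> 'n \<Rightarrow> real) \<Rightarrow> (int^'n \<Rightarrow> real) \<Rightarrow> int^'n \<Rightarrow> real" where
  "walk_op T a u z = u z - massive_op T a u z / (1 / T + 2 * real CARD('n))"

primrec walk_iter :: "real \<Rightarrow> (int^'n::finite \<Rightarrow> 'n \<Rightarrow> real) \<Rightarrow> int^'n \<Rightarrow> nat \<Rightarrow> int^'n \<Rightarrow> real" where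
  "walk_iter T a p 0 = (\<lambda>z. if z = p then 1 else 0)"
| "walk_iter T a p (Suc n) = walk_op T a (walk_iter T a p n)"

lemma walk_op_eq:
  fixes u :: "int^'n::finite \<Rightarrow> real"
  assumes T: "T > 0"
  shows "walk_op T a u z = (\<Sum>i\<in>UNIV. (2 - a (z - unitv i) i - a z i) * u z
      + a (z - unitv i) i * u (z - unitv i) + a z i * u (z + unitv i)) / (1 / T + 2 * real CARD('n))"
proof -
  define k where "k = 1 / T + 2 * real CARD('n)"
  have "k > 0" using T unfolding k_def by (simp add: add_pos_nonneg)
  then have "walk_op T a u z = (k * u z - massive_op T a u z) / k"
    unfolding walk_op_def k_def[symmetric] by (simp add: field_simps)
  also have "k * u z - massive_op T a u z = (\<Sum>i\<in>UNIV. (2 - a (z - unitv i) i - a z i) * u z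
      + a (z - unitv i) i * u (z - unitv i) + a z i * u (z + unitv i))"
  proof -
    have "k * u z = u z / T + (\<Sum>i\<in>(UNIV::'n set). 2 * u z)"
      unfolding k_def by (simp add: algebra_simps)
    then have "k * u z - massive_op T a u z = (\<Sum>i\<in>UNIV. 2 * u z
        - (a (z - unitv i) i * grad u (z - unitv i) i - a z i * grad u z i))"
      by (simp add: massive_op_def divg_def sum_subtractf)
    also have "\<dots> = (\<Sum>i\<in>UNIV. (2 - a (z - unitv i) i - a z i) * u z
        + a (z - unitv i) i * u (z - unitv i) + a z i * u (z + unitv i))"
      by (rule sum.cong) (auto simp: grad_def algebra_simps)
    finally show ?thesis .
  qed
  finally show ?thesis unfolding k_def .
qed

lemma walk_op_nonneg:
  assumes T: "T > 0" and a: "in_Omega a" and u: "\<And>z. u z \<ge> 0"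
  shows "walk_op T a u z \<ge> 0"
  unfolding walk_op_eq[OF T]
proof (intro divide_nonneg_pos sum_nonneg add_nonneg_nonneg mult_nonneg_nonneg)
  show "0 \<le> 2 - a (z - unitv i) i - a z i" for i
    using a[unfolded in_Omega_def, rule_format, of "z - unitv i" i]
      a[unfolded in_Omega_def, rule_format, of z i] by linarith
qed (use a u T in \<open>auto simp: in_Omega_def add_pos_nonneg\<close>)

lemma walk_op_sums:
  assumes T: "T > 0" and f: "\<And>w. (\<lambda>n. f n w) sums s w"
  shows "(\<lambda>n. walk_op T a (f n) z) sums walk_op T a s z"
  unfolding walk_op_eq[OF T] by (intro sums_divide sums_sum sums_add sums_mult f)

lemma has_sum_backward_difference:
  fixes F :: "'a::ab_group_add \<Rightarrow> 'b::{topological_ab_group_add,t2_space}"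
  assumes "F summable_on UNIV"
  shows "((\<lambda>z. F (z - c) - F z) has_sum 0) UNIV"
proof -
  have "((\<lambda>z. F (z + c - c)) has_sum infsum F UNIV) UNIV" using assms by simp
  then have "((\<lambda>z. F (z - c)) has_sum infsum F UNIV) UNIV"
    by (rule has_sum_translate[THEN iffD1])
  from has_sum_diff[OF this has_sum_infsum[OF assms]] show ?thesis by simp
qed

lemma has_sum_massive_op:
  assumes a: "in_Omega a" and u0: "\<And>z. u z \<ge> 0" and u: "u summable_on UNIV"
  shows "(massive_op T a u has_sum (infsum u UNIV / T)) UNIV"
proof -
  have flux: "(\<lambda>z. a z i * grad u z i) summable_on UNIV" for i
  proof -
    have "(\<lambda>z. a z i * u (z + unitv i)) summable_on UNIV"
      by (rule summable_on_comparison_test[of "\<lambda>z. u (z + unitv i)"])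
         (use a u0 u in \<open>auto simp: summable_on_translate in_Omega_def intro: mult_left_le_one_le\<close>)
    moreover have "(\<lambda>z. a z i * u z) summable_on UNIV"
      by (rule summable_on_comparison_test[of u])
         (use a u0 u in \<open>auto simp: in_Omega_def intro: mult_left_le_one_le\<close>)
    ultimately have "(\<lambda>z. a z i * u (z + unitv i) - a z i * u z) summable_on UNIV"
      by (rule summable_on_diff)
    then show ?thesis by (simp add: grad_def algebra_simps)
  qed
  then have "((\<lambda>z. a (z - unitv i) i * grad u (z - unitv i) i - a z i * grad u z i) has_sum 0) UNIV" for i
    by (rule has_sum_backward_difference)
  then have "((\<lambda>z. \<Sum>i\<in>UNIV. a (z - unitv i) i * grad u (z - unitv i) i - a z i * grad u z i)
      has_sum (\<Sum>i\<in>(UNIV::'n set). 0)) UNIV"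
    using has_sum_sum[where I = UNIV and A = UNIV and s = "\<lambda>_. 0"
        and f = "\<lambda>i z. a (z - unitv i) i * grad u (z - unitv i) i - a z i * grad u z i"] by simp
  then have "(divg (\<lambda>w i. a w i * grad u w i) has_sum 0) UNIV"
    by (simp add: divg_def[abs_def])
  then have "((\<lambda>z. u z * (1 / T) + divg (\<lambda>w i. a w i * grad u w i) z) has_sum (infsum u UNIV * (1 / T) + 0)) UNIV"
    using u by (intro has_sum_add has_sum_cmult_left) simp_all
  then show ?thesis by (simp add: massive_op_def[abs_def])
qed

lemma walk_iter_nonneg:
  assumes T: "T > 0" and a: "in_Omega a"
  shows "walk_iter T a p n z \<ge> 0"
  using walk_op_nonneg[OF T a] by (induction n arbitrary: z) auto

text \<open>Each step kills the fraction \<open>1/(1 + 2dT)\<close> of the total mass.\<close>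

lemma has_sum_walk_iter:
  fixes a :: "int^'n::finite \<Rightarrow> 'n \<Rightarrow> real"
  assumes T: "T > 0" and a: "in_Omega a"
  shows "(walk_iter T a p n has_sum (1 - 1 / (1 + 2 * real CARD('n) * T)) ^ n) UNIV"
proof (induction n)
  case 0
  have "((\<lambda>z. if z = p then 1 else 0) has_sum (1::real)) {p}"
    by (simp add: has_sum_finiteI)
  then show ?case
    using has_sum_cong_neutral[of UNIV "{p}" "\<lambda>z. if z = p then 1 else (0::real)"] by simp
next
  case (Suc n)
  define k where "k = 1 / T + 2 * real CARD('n)"
  define q where "q = 1 - 1 / (1 + 2 * real CARD('n) * T)"
  let ?u = "walk_iter T a p n"
  have u: "(?u has_sum q ^ n) UNIV" using Suc unfolding q_def .
  have "?u summable_on UNIV" "infsum ?u UNIV = q ^ n" using u by (auto simp: has_sum_iff)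
  then have "(massive_op T a ?u has_sum (q ^ n / T)) UNIV"
    using has_sum_massive_op[OF a, of ?u T] walk_iter_nonneg[OF T a] by simp
  from has_sum_diff[OF u has_sum_cmult_left[OF this, of "1 / k"]]
  have "(walk_op T a ?u has_sum (q ^ n - q ^ n / T * (1 / k))) UNIV"
    by (simp add: walk_op_def[abs_def] k_def)
  moreover have "q ^ n - q ^ n / T * (1 / k) = q ^ Suc n"
  proof -
    have Tk: "T * k = 1 + 2 * real CARD('n) * T" using T unfolding k_def by (simp add: field_simps)
    have "q ^ n / T * (1 / k) = q ^ n / (T * k)" by simp
    also have "\<dots> = q ^ n * (1 - q)" unfolding Tk q_def by simp
    finally show ?thesis by (simp add: algebra_simps)
  qed
  ultimately show ?case unfolding q_def by simp
qed

lemma walk_iter_le: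
  fixes a :: "int^'n::finite \<Rightarrow> 'n \<Rightarrow> real"
  assumes T: "T > 0" and a: "in_Omega a"
  shows "walk_iter T a p n z \<le> (1 - 1 / (1 + 2 * real CARD('n) * T)) ^ n"
  using finite_sum_le_has_sum[OF has_sum_walk_iter[OF T a], of "{z}"] walk_iter_nonneg[OF T a] by simp

definition walk_series :: "real \<Rightarrow> (int^'n::finite \<Rightarrow> 'n \<Rightarrow> real) \<Rightarrow> int^'n \<Rightarrow> int^'n \<Rightarrow> real" where
  "walk_series T a p z = (\<Sum>n. walk_iter T a p n z)"

lemma walk_ratio_bounds:
  fixes c T :: real
  assumes "0 \<le> c" "0 \<le> T"
  shows "0 \<le> 1 - 1 / (1 + c * T)" "1 - 1 / (1 + c * T) < 1"
proof -
  define x where "x = 1 + c * T"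
  have "0 \<le> c * T" using assms by simp
  then have "1 \<le> x" unfolding x_def by simp
  then have "0 < 1 / x" "1 / x \<le> 1" by simp_all
  then show "0 \<le> 1 - 1 / (1 + c * T)" "1 - 1 / (1 + c * T) < 1" unfolding x_def[symmetric] by linarith+
qed

lemma sums_walk_series:
  fixes a :: "int^'n::finite \<Rightarrow> 'n \<Rightarrow> real"
  assumes T: "T > 0" and a: "in_Omega a"
  shows "(\<lambda>n. walk_iter T a p n z) sums walk_series T a p z"
proof -
  define q where "q = 1 - 1 / (1 + 2 * real CARD('n) * T)"
  have "0 \<le> q" "q < 1" unfolding q_def using walk_ratio_bounds[of "2 * real CARD('n)" T] T by auto
  then show ?thesis
    unfolding walk_series_def using walk_iter_nonneg[OF T a] walk_iter_le[OF T a]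
    by (intro summable_sums summable_comparison_test[OF _ summable_geometric[of q]])
       (auto simp: q_def)
qed

lemma walk_series_nonneg: "T > 0 \<Longrightarrow> in_Omega a \<Longrightarrow> 0 \<le> walk_series T a p z"
  using sums_le[OF _ sums_zero sums_walk_series] walk_iter_nonneg by blast

text \<open>The total mass of the series is \<open>\<Sum>\<^sub>n q\<^sup>n = 1/(1 - q) = 1 + 2dT\<close>.\<close>

lemma sum_walk_series_le:
  fixes a :: "int^'n::finite \<Rightarrow> 'n \<Rightarrow> real"
  assumes T: "T > 0" and a: "in_Omega a" and F: "finite F"
  shows "sum (walk_series T a p) F \<le> 1 + 2 * real CARD('n) * T"
proof -
  define q where "q = 1 - 1 / (1 + 2 * real CARD('n) * T)"
  have "0 \<le> q" "q < 1" unfolding q_def using walk_ratio_bounds[of "2 * real CARD('n)" T] T by auto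
  have "(\<lambda>n. \<Sum>z\<in>F. walk_iter T a p n z) sums sum (walk_series T a p) F"
    using sums_walk_series[OF T a] by (rule sums_sum)
  moreover have "(\<lambda>n. q ^ n) sums (1 / (1 - q))" using \<open>0 \<le> q\<close> \<open>q < 1\<close> by (simp add: geometric_sums)
  moreover have "(\<Sum>z\<in>F. walk_iter T a p n z) \<le> q ^ n" for n
    using finite_sum_le_has_sum[OF has_sum_walk_iter[OF T a] F] walk_iter_nonneg[OF T a]
    unfolding q_def by simp
  ultimately have "sum (walk_series T a p) F \<le> 1 / (1 - q)" by (rule sums_le[rotated])
  also have "1 / (1 - q) = 1 + 2 * real CARD('n) * T" unfolding q_def by simp
  finally show ?thesis .
qed

lemma ell2_walk_series:
  fixes a :: "int^'n::finite \<Rightarrow> 'n \<Rightarrow> real"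
  assumes T: "T > 0" and a: "in_Omega a"
  shows "ell2 (walk_series T a p)"
proof -
  define C where "C = 1 + 2 * real CARD('n) * T"
  have "walk_series T a p summable_on UNIV"
    using sum_walk_series_le[OF T a] walk_series_nonneg[OF T a]
    by (intro nonneg_bdd_above_summable_on bdd_aboveI) auto
  then show ?thesis
    unfolding ell2_def
  proof (rule summable_on_comparison_test[OF summable_on_cmult_right[where c = C]])
    show "(walk_series T a p z)\<^sup>2 \<le> C * walk_series T a p z" for z
      using mult_right_mono[OF sum_walk_series_le[OF T a, of "{z}"] walk_series_nonneg[OF T a]]
      unfolding C_def by (simp add: power2_eq_square)
  qed auto
qed

lemma massive_op_walk_series:
  fixes a :: "int^'n::finite \<Rightarrow> 'n \<Rightarrow> real"
  assumes T: "T > 0" and a: "in_Omega a"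
  shows "massive_op T a (walk_series T a p) z = (1 / T + 2 * real CARD('n)) * (if z = p then 1 else 0)"
proof -
  define k where "k = 1 / T + 2 * real CARD('n)"
  have "k > 0" using T unfolding k_def by (simp add: add_pos_nonneg)
  have "(\<lambda>n. walk_iter T a p (Suc n) z) sums (walk_series T a p z - walk_iter T a p 0 z)"
    using sums_walk_series[OF T a] by (subst sums_Suc_iff) simp
  moreover have "(\<lambda>n. walk_iter T a p (Suc n) z) sums walk_op T a (walk_series T a p) z"
    unfolding walk_iter.simps by (rule walk_op_sums[OF T sums_walk_series[OF T a]])
  ultimately have "walk_series T a p z - walk_iter T a p 0 z = walk_op T a (walk_series T a p) z"
    by (rule sums_unique2)
  then have "massive_op T a (walk_series T a p) z / k = (if z = p then 1 else 0)"
    unfolding walk_op_def k_def by simp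
  then show ?thesis using \<open>k > 0\<close> unfolding k_def[symmetric] by (simp add: field_simps)
qed

lemma green_solves:
  fixes a :: "int^'n::finite \<Rightarrow> 'n \<Rightarrow> real"
  assumes T: "T > 0" and a: "in_Omega a"
  shows "ell2 (\<lambda>z. green T a z p)"
    and "massive_op T a (\<lambda>z. green T a z p) z = (if z = p then 1 else 0)"
proof -
  define k where "k = 1 / T + 2 * real CARD('n)"
  define g where "g z = 1 / k * walk_series T a p z" for z
  have "k > 0" using T unfolding k_def by (simp add: add_pos_nonneg)
  have "ell2 g" unfolding g_def by (rule ell2_scale[OF ell2_walk_series[OF T a]])
  moreover have "massive_op T a g z = (if z = p then 1 else 0)" for z
    unfolding g_def massive_op_scale massive_op_walk_series[OF T a] k_def[symmetric]
    using \<open>k > 0\<close> by simp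
  moreover have "(\<lambda>z. green T a z p) = g" using green_eqI[OF T a] calculation by blast
  ultimately show "ell2 (\<lambda>z. green T a z p)" "massive_op T a (\<lambda>z. green T a z p) z = (if z = p then 1 else 0)"
    by auto
qed

section \<open>The dipole potential\<close>

lemma neq_add_unitv: "x \<noteq> x + unitv i"
  unfolding unitv_def by (metis add_cancel_left_right axis_nth zero_index zero_neq_one)

lemma dirichlet_energy_dipole:
  assumes T: "T > 0" and a: "in_Omega a"
  shows "dirichlet_energy T a (\<lambda>z. green T a z (x + unitv i) - green T a z x) = gradgrad_green T a x i"
proof -
  define y where "y = x + unitv i"
  define w where "w z = green T a z y - green T a z x" for z
  have "x \<noteq> y" unfolding y_def by (rule neq_add_unitv)
  have w: "ell2 w" unfolding w_def by (intro ell2_diff green_solves(1)[OF T a])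
  have Lw: "massive_op T a w z = (if z = y then 1 else 0) - (if z = x then 1 else 0)" for z
    unfolding w_def[abs_def] massive_op_diff using green_solves(2)[OF T a] by simp
  have "((\<lambda>z. w z * massive_op T a w z) has_sum (w y - w x)) {x, y}"
    using \<open>x \<noteq> y\<close> by (intro has_sum_finiteI) (auto simp: Lw)
  then have "((\<lambda>z. w z * massive_op T a w z) has_sum (w y - w x)) UNIV"
    using has_sum_cong_neutral[of UNIV "{x, y}" "\<lambda>z. w z * massive_op T a w z"] by (auto simp: Lw)
  with has_sum_pairing_massive_op[OF a w, of T] have "dirichlet_energy T a w = w y - w x"
    by (rule has_sum_unique)
  then show ?thesis
    unfolding w_def y_def gradgrad_green_def Let_def by simp
qed

lemma dipole_bond_energy:
  fixes a :: "int^'n::finite \<Rightarrow> 'n \<Rightarrow> real" and x :: "int^'n" and i :: 'n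
  assumes T: "T > 0" and a: "in_Omega a"
  defines "D \<equiv> gradgrad_green T a x i"
  obtains w where "grad w x i = D" and "0 \<le> D - a x i * D\<^sup>2"
    and "\<And>z j. (z, j) \<noteq> (x, i) \<Longrightarrow> a z j * (grad w z j)\<^sup>2 \<le> D - a x i * D\<^sup>2"
proof
  define w where "w z = green T a z (x + unitv i) - green T a z x" for z
  have w: "ell2 w" unfolding w_def by (intro ell2_diff green_solves(1)[OF T a])
  have energy: "dirichlet_energy T a w = D"
    unfolding w_def[abs_def] D_def by (rule dirichlet_energy_dipole[OF T a])
  show grad: "grad w x i = D"
    unfolding w_def D_def grad_def gradgrad_green_def Let_def by simp
  show "0 \<le> D - a x i * D\<^sup>2"
    using sum_bond_energy_le_dirichlet_energy[OF T a w, of "{(x, i)}"] by (simp add: energy grad)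
  show "a z j * (grad w z j)\<^sup>2 \<le> D - a x i * D\<^sup>2" if "(z, j) \<noteq> (x, i)" for z j
  proof -
    have "(x, i) \<notin> {(z, j)}" using that by auto
    then show ?thesis
      using sum_bond_energy_le_dirichlet_energy[OF T a w, of "{(x, i), (z, j)}"]
      by (simp add: energy grad)
  qed
qed

lemma abs_le_sqrt_div_of_weighted_sq_le:
  fixes \<beta> g E :: real
  assumes "0 < \<beta>" "\<beta> \<le> 1" "\<beta> * g\<^sup>2 \<le> E"
  shows "\<bar>g\<bar> \<le> sqrt E / \<beta>"
proof -
  have "g\<^sup>2 \<le> E / \<beta>" using assms by (simp add: field_simps)
  also have "\<dots> \<le> E / \<beta>\<^sup>2"
  proof (rule divide_left_mono)
    have "0 \<le> \<beta> * g\<^sup>2" using assms(1) by simp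
    then show "0 \<le> E" using assms(3) by linarith
    show "\<beta>\<^sup>2 \<le> \<beta>" using assms(1,2) by (simp add: power2_eq_square mult_left_le_one_le)
  qed (use assms(1) in simp)
  finally have "sqrt (g\<^sup>2) \<le> sqrt (E / \<beta>\<^sup>2)" by (rule real_sqrt_le_mono)
  then show ?thesis using assms by (simp add: real_sqrt_divide)
qed

section \<open>Paths and the chemical distance\<close>

lemma bond_cost_ge_one:
  assumes "in_Omega b"
  shows "1 \<le> bond_cost b z j"
proof (cases "b z j = 0")
  case False
  then have "0 < b z j" "b z j \<le> 1" using assms by (auto simp: in_Omega_def order_le_less)
  then show ?thesis using False by (simp add: bond_cost_def one_ereal_def)
qed (simp add: bond_cost_def)

lemma step_cost_ge_one: "in_Omega b \<Longrightarrow> 1 \<le> step_cost b p q"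
  unfolding step_cost_def using bond_cost_ge_one by auto

lemma finite_step_cost_imp_bond:
  assumes nn: "nn p q" and fin: "step_cost b p q \<noteq> \<infinity>"
  obtains z j where "b z j \<noteq> 0" "step_cost b p q = ereal (1 / b z j)" "\<bar>f q - f p\<bar> = \<bar>grad f z j\<bar>"
proof (cases "\<exists>i. q = p + unitv i")
  case True
  define j where "j = (SOME i. q = p + unitv i)"
  have q: "q = p + unitv j" unfolding j_def using True by (rule someI_ex)
  have "step_cost b p q = bond_cost b p j" using True unfolding step_cost_def j_def by simp
  with fin q show ?thesis by (intro that[of p j]) (auto simp: bond_cost_def grad_def split: if_splits)
next
  case False
  then have "\<exists>i. p = q + unitv i" using nn unfolding nn_def by auto
  define j where "j = (SOME i. p = q + unitv i)"
  have p: "p = q + unitv j" unfolding j_def using \<open>\<exists>i. p = q + unitv i\<close> by (rule someI_ex)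
  have "step_cost b p q = bond_cost b q j" using False unfolding step_cost_def j_def by simp
  with fin p show ?thesis by (intro that[of q j]) (auto simp: bond_cost_def grad_def split: if_splits)
qed

lemma path_cost_ge_one:
  assumes b: "in_Omega b" and ps: "is_path ps" "hd ps \<noteq> last ps"
  shows "1 \<le> path_cost b ps"
proof -
  have "2 \<le> length ps" using ps unfolding is_path_def by (cases ps; cases "tl ps") auto
  then obtain n where n: "length ps - 1 = Suc n" by (cases "length ps - 1") auto
  have nonneg: "0 \<le> step_cost b p q" for p q
    using step_cost_ge_one[OF b] by (rule order_trans[rotated]) simp
  have "1 \<le> step_cost b (ps ! 0) (ps ! 1)" by (rule step_cost_ge_one[OF b])
  also have "\<dots> \<le> step_cost b (ps ! 0) (ps ! 1) + (\<Sum>k<n. step_cost b (ps ! Suc k) (ps ! Suc (Suc k)))"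
    by (simp add: add_increasing2 sum_nonneg nonneg)
  also have "\<dots> = path_cost b ps"
    unfolding path_cost_def n by (simp add: sum.lessThan_Suc_shift del: sum.lessThan_Suc)
  finally show ?thesis .
qed

lemma abs_diff_le_path_cost:
  assumes b: "in_Omega b" and bond: "\<And>z j. b z j \<noteq> 0 \<Longrightarrow> \<bar>grad f z j\<bar> \<le> c / b z j"
    and ps: "is_path ps" and fin: "path_cost b ps \<noteq> \<infinity>"
  shows "\<bar>f (last ps) - f (hd ps)\<bar> \<le> c * real_of_ereal (path_cost b ps)"
proof -
  define n where "n = length ps - 1"
  have step_fin: "step_cost b (ps ! k) (ps ! Suc k) \<noteq> \<infinity>" if "k < n" for k
    using fin that unfolding path_cost_def n_def[symmetric] by (auto simp: sum_Pinfty)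
  have step: "\<bar>f (ps ! Suc k) - f (ps ! k)\<bar> \<le> c * real_of_ereal (step_cost b (ps ! k) (ps ! Suc k))"
    if k: "k < n" for k
  proof -
    have "nn (ps ! k) (ps ! Suc k)" using ps k unfolding is_path_def n_def by auto
    then obtain z j where "b z j \<noteq> 0" "step_cost b (ps ! k) (ps ! Suc k) = ereal (1 / b z j)"
        "\<bar>f (ps ! Suc k) - f (ps ! k)\<bar> = \<bar>grad f z j\<bar>"
      using finite_step_cost_imp_bond step_fin[OF k] by metis
    then show ?thesis using bond[of z j] by simp
  qed
  have "f (last ps) - f (hd ps) = (\<Sum>k<n. f (ps ! Suc k) - f (ps ! k))"
    using ps sum_lessThan_telescope[of "\<lambda>k. f (ps ! k)" n]
    unfolding is_path_def n_def by (simp add: hd_conv_nth last_conv_nth)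
  then have "\<bar>f (last ps) - f (hd ps)\<bar> \<le> (\<Sum>k<n. \<bar>f (ps ! Suc k) - f (ps ! k)\<bar>)"
    by (simp add: sum_abs)
  also have "\<dots> \<le> (\<Sum>k<n. c * real_of_ereal (step_cost b (ps ! k) (ps ! Suc k)))"
    using step by (intro sum_mono) auto
  also have "\<dots> = c * real_of_ereal (path_cost b ps)"
    unfolding path_cost_def n_def[symmetric] sum_distrib_left[symmetric]
  proof (subst sum_real_of_ereal)
    show "\<bar>step_cost b (ps ! k) (ps ! Suc k)\<bar> \<noteq> \<infinity>" if "k \<in> {..<n}" for k
      using step_fin[of k] step_cost_ge_one[OF b, of "ps ! k" "ps ! Suc k"] that
      by (cases "step_cost b (ps ! k) (ps ! Suc k)") auto
  qed simp
  finally show ?thesis .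
qed

section \<open>From the energy bound to the chemical distance\<close>

text \<open>Here \<open>D (1 - \<alpha> D)\<close> is the energy left off the bond \<open>b\<close>; dividing the bound on \<open>D\<^sup>2\<close>
  by \<open>D\<close> requires first excluding \<open>1 - \<alpha> D \<le> 0\<close>.\<close>

lemma le_mult_sq_of_sq_le_energy:
  fixes \<alpha> D R :: real
  assumes \<alpha>: "0 < \<alpha>" and E: "0 \<le> D * (1 - \<alpha> * D)" and DR: "D\<^sup>2 \<le> D * (1 - \<alpha> * D) * R\<^sup>2"
  shows "0 < 1 - \<alpha> * D" and "D \<le> (1 - \<alpha> * D) * R\<^sup>2"
proof -
  show s: "0 < 1 - \<alpha> * D"
  proof (rule ccontr)
    assume "\<not> 0 < 1 - \<alpha> * D"
    then have "0 < \<alpha> * D" by linarith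
    then have "D > 0" using \<alpha> by (simp add: zero_less_mult_iff)
    with E \<open>\<not> 0 < 1 - \<alpha> * D\<close> have "1 - \<alpha> * D = 0" by (simp add: zero_le_mult_iff)
    then show False using DR \<open>D > 0\<close> by simp
  qed
  show "D \<le> (1 - \<alpha> * D) * R\<^sup>2"
  proof (cases "D > 0")
    case True
    then show ?thesis using DR by (simp add: power2_eq_square mult.assoc)
  next
    case False
    moreover have "0 \<le> (1 - \<alpha> * D) * R\<^sup>2" using s by simp
    ultimately show ?thesis by linarith
  qed
qed

lemma one_plus_div_le_three_sq:
  fixes \<alpha> D R :: real
  assumes \<alpha>: "0 \<le> \<alpha>" "\<alpha> \<le> 1" and E: "0 \<le> D - \<alpha> * D\<^sup>2"
    and DR: "\<bar>D\<bar> \<le> sqrt (D - \<alpha> * D\<^sup>2) * R" and R: "1 \<le> R"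
  shows "1 + \<alpha> / (1 - \<alpha> * D) \<le> 3 * R\<^sup>2"
proof -
  have "1 \<le> R\<^sup>2" using R by (simp add: one_le_power)
  have "\<alpha> / (1 - \<alpha> * D) \<le> R\<^sup>2 + 1"
  proof (cases "\<alpha> = 0")
    case False
    define s where "s = 1 - \<alpha> * D"
    have Es: "D - \<alpha> * D\<^sup>2 = D * s" unfolding s_def by (simp add: power2_eq_square algebra_simps)
    have "D\<^sup>2 \<le> D * s * R\<^sup>2"
      using power_mono[OF DR abs_ge_zero, of 2] E by (simp add: power_mult_distrib Es)
    with False \<alpha> E have "0 < s" "D \<le> s * R\<^sup>2"
      using le_mult_sq_of_sq_le_energy[of \<alpha> D R] unfolding s_def Es by auto
    then have "1 \<le> s * (\<alpha> * R\<^sup>2 + 1)"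
      using mult_left_mono[of D "s * R\<^sup>2" \<alpha>] \<alpha> unfolding s_def by (simp add: algebra_simps)
    then have "1 / s \<le> \<alpha> * R\<^sup>2 + 1" using \<open>0 < s\<close> by (simp add: field_simps)
    then have "\<alpha> / s \<le> \<alpha> * (\<alpha> * R\<^sup>2 + 1)" using mult_left_mono[of "1 / s" _ \<alpha>] \<alpha> by simp
    moreover have "\<alpha> * (\<alpha> * R\<^sup>2) \<le> \<alpha> * R\<^sup>2" "\<alpha> * R\<^sup>2 \<le> R\<^sup>2"
      using \<alpha> by (simp_all add: mult_left_le_one_le)
    ultimately show ?thesis using \<alpha>(2) unfolding s_def by (simp add: distrib_left)
  qed (use \<open>1 \<le> R\<^sup>2\<close> in simp)
  with \<open>1 \<le> R\<^sup>2\<close> show ?thesis by linarith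
qed

lemma le_mult_sq_max_one_sqrt:
  fixes L C :: real
  assumes "C > 0"
  shows "L \<le> C * (max 1 (sqrt (L / C)))\<^sup>2"
proof -
  have "L / C \<le> (max 1 (sqrt (L / C)))\<^sup>2"
  proof (cases "L / C \<le> 1")
    case False
    then have "L / C = (sqrt (L / C))\<^sup>2" by simp
    also have "\<dots> \<le> (max 1 (sqrt (L / C)))\<^sup>2" using False by (intro power_mono) auto
    finally show ?thesis .
  qed (use one_le_power[of "max 1 (sqrt (L / C))" 2] in auto)
  then show ?thesis using assms by (simp add: pos_divide_le_eq mult.commute)
qed

lemma max_one_sqrt_le:
  fixes L C R :: real
  assumes "C > 0" "1 \<le> R" "L \<le> C * R\<^sup>2"
  shows "max 1 (sqrt (L / C)) \<le> R"
  using assms by (auto intro!: real_le_lsqrt simp: pos_divide_le_eq mult.commute)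

lemma ereal_le_chem_dist_power:
  fixes L C :: real
  assumes C: "C > 0" and b: "in_Omega b" and "x \<noteq> y"
    and paths: "\<And>ps R. is_path ps \<Longrightarrow> hd ps = x \<Longrightarrow> last ps = y \<Longrightarrow> path_cost b ps = ereal R \<Longrightarrow>
      1 \<le> R \<Longrightarrow> L \<le> C * R\<^sup>2"
  shows "ereal L \<le> ereal C * (chem_dist b x y ^ Suc n)\<^sup>2"
proof -
  define m where "m = max 1 (sqrt (L / C))"
  have "ereal m \<le> chem_dist b x y"
    unfolding chem_dist_def
  proof (rule Inf_greatest)
    fix c assume "c \<in> {path_cost b ps |ps. is_path ps \<and> hd ps = x \<and> last ps = y}"
    then obtain ps where ps: "is_path ps" "hd ps = x" "last ps = y" and c: "c = path_cost b ps"
      by blast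
    have "1 \<le> path_cost b ps" using path_cost_ge_one[OF b ps(1)] ps \<open>x \<noteq> y\<close> by simp
    then show "ereal m \<le> c"
      unfolding c m_def using max_one_sqrt_le[OF C _ paths[OF ps]]
      by (cases "path_cost b ps") auto
  qed
  then show ?thesis
  proof (cases "chem_dist b x y")
    case (real r)
    with \<open>ereal m \<le> chem_dist b x y\<close> have "m \<le> r" by simp
    moreover have "1 \<le> m" unfolding m_def by simp
    ultimately have "r \<le> r ^ Suc n" using power_increasing[of 1 "Suc n" r] by simp
    with \<open>m \<le> r\<close> have "m \<le> r ^ Suc n" by (rule order_trans)
    with \<open>1 \<le> m\<close> have "m\<^sup>2 \<le> (r ^ Suc n)\<^sup>2" by (intro power_mono) auto
    then have "C * m\<^sup>2 \<le> C * (r ^ Suc n)\<^sup>2" using C by simp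
    with le_mult_sq_max_one_sqrt[OF C, of L] have "L \<le> C * (r ^ Suc n)\<^sup>2"
      unfolding m_def by linarith
    with real show ?thesis by simp
  qed (use C in auto)
qed

lemma in_Omega_close_bond: "in_Omega a \<Longrightarrow> in_Omega (a(x := (a x)(i := 0)))"
  unfolding in_Omega_def by auto

lemma abs_gradgrad_green_le_path_cost:
  fixes a :: "int^'n::finite \<Rightarrow> 'n \<Rightarrow> real" and x :: "int^'n" and i :: 'n and R :: real
  assumes T: "T > 0" and a: "in_Omega a"
  defines "D \<equiv> gradgrad_green T a x i" and "a0 \<equiv> a(x := (a x)(i := 0))"
  assumes ps: "is_path ps" "hd ps = x" "last ps = x + unitv i" and R: "path_cost a0 ps = ereal R"
  shows "\<bar>D\<bar> \<le> sqrt (D - a x i * D\<^sup>2) * R"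
proof -
  define E where "E = D - a x i * D\<^sup>2"
  obtain w where grad: "grad w x i = D" and "0 \<le> E"
    and bonds: "\<And>z j. (z, j) \<noteq> (x, i) \<Longrightarrow> a z j * (grad w z j)\<^sup>2 \<le> E"
    unfolding E_def D_def by (rule dipole_bond_energy[OF T a, of x i]) blast
  have a0: "in_Omega a0" unfolding a0_def by (rule in_Omega_close_bond[OF a])
  have "\<bar>grad w z j\<bar> \<le> sqrt E / a0 z j" if "a0 z j \<noteq> 0" for z j
  proof -
    have "(z, j) \<noteq> (x, i)" "a0 z j = a z j" using that unfolding a0_def by auto
    moreover have "0 \<le> a0 z j" "a0 z j \<le> 1" using a0 unfolding in_Omega_def by auto
    ultimately show ?thesis
      using bonds[of z j] that by (intro abs_le_sqrt_div_of_weighted_sq_le) (auto simp: order_less_le)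
  qed
  from abs_diff_le_path_cost[OF a0 this ps(1)] R
  have "\<bar>w (last ps) - w (hd ps)\<bar> \<le> sqrt E * R" by simp
  moreover have "w (last ps) - w (hd ps) = D" using ps grad unfolding grad_def by simp
  ultimately show ?thesis unfolding E_def by simp
qed

theorem lemma9:
  shows "\<exists>K::real. K > 0 \<and>
    (\<forall>(T::real) (a :: int^'n::finite \<Rightarrow> 'n \<Rightarrow> real) x i. T > 0 \<longrightarrow> in_Omega a \<longrightarrow>
       ereal (1 + a x i / (1 - a x i * gradgrad_green T a x i)) \<le> ereal K * (omega0 a x i)\<^sup>2)"
proof (intro exI[of _ 3] conjI allI impI)
  fix T :: real and a :: "int^'n::finite \<Rightarrow> 'n \<Rightarrow> real" and x :: "int^'n" and i :: 'n
  assume T: "T > 0" and a: "in_Omega a"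
  define D where "D = gradgrad_green T a x i"
  have E0: "0 \<le> D - a x i * D\<^sup>2"
    by (rule dipole_bond_energy[OF T a, of x i]) (simp add: D_def)
  have "ereal (1 + a x i / (1 - a x i * D))
      \<le> ereal 3 * (chem_dist (a(x := (a x)(i := 0))) x (x + unitv i) ^ Suc (Suc CARD('n)))\<^sup>2"
  proof (rule ereal_le_chem_dist_power[OF _ in_Omega_close_bond[OF a] neq_add_unitv])
    fix ps R assume "is_path ps" "hd ps = x" "last ps = x + unitv i"
      "path_cost (a(x := (a x)(i := 0))) ps = ereal R" "1 \<le> R"
    with abs_gradgrad_green_le_path_cost[OF T a] show "1 + a x i / (1 - a x i * D) \<le> 3 * R\<^sup>2"
      using a E0 unfolding D_def in_Omega_def by (intro one_plus_div_le_three_sq) auto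
  qed simp
  then show "ereal (1 + a x i / (1 - a x i * gradgrad_green T a x i)) \<le> ereal 3 * (omega0 a x i)\<^sup>2"
    by (simp add: D_def omega0_def omega_def)
qed simp

end
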